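(* Let $A$ be a set of regular cardinals and let $\lambda\in\operatorname{spec}(A)$. Then either $\lambda\leq\operatorname{cf}(\prod A/J_{\mathrm{bd}})$, or $\lambda\in\operatorname{spec}(\bar A)$ for some proper initial segment $\bar A$ of $A$. In particular, if $\lambda\in\operatorname{spec}^*(A)$, then $\lambda\leq\operatorname{cf}(\prod A/J_{\mathrm{bd}})$.
   Context: $\prod A$ is the set of functions $f$ on $A$ with $f(a)\in a$, ordered pointwise. $J_{\mathrm{bd}}$ is the ideal of bounded subsets of $A$; $\operatorname{cf}(\prod A/J_{\mathrm{bd}})$ is the least size of a family $\mathcal{C}\subseteq\prod A$ such that every $h\in\prod A$ satisfies $h<f$ modulo $J_{\mathrm{bd}}$ (i.e., $\{a:h(a)\geq f(a)\}\in J_{\mathrm{bd}}$) for some $f\in\mathcal{C}$. $\operatorname{spec}(B)$, for a set $B$ of regular cardinals, is the set of regular $\kappa$ for which some $\mathcal{F}\subseteq\prod B$ of size $\kappa$ has every $\kappa$-sized subset unbounded in $(\prod B,<)$ (equivalently, $(\prod B,<)\geq_T\kappa$ in the Tukey order). For $\mathcal{G}\subseteq\prod A$, $\operatorname{ub}(\mathcal{G})$ is the set of $a\in A$ with $\{f(a):f\in\mathcal{G}\}$ unbounded in $a$. $\operatorname{spec}^*(A)$ is the set of regular $\lambda$ such that there is $\mathcal{F}\subseteq\prod A$ of size $\lambda$ with $\operatorname{ub}(\mathcal{F}_0)$ unbounded in $\sup(A)$ for every $\lambda$-sized $\mathcal{F}_0\subseteq\mathcal{F}$. *)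

theory Defs
  imports Main "HOL-Library.FuncSet"
begin

text \<open>Ordinals are modelled as elements of an arbitrary well-ordered type 'k;
  an ordinal a is identified with the set of its predecessors {x. x < a}.\<close>

definition below :: "'k::wellorder \<Rightarrow> 'k set" where
  "below a = {x. x < a}"

definition card_le :: "'a set \<Rightarrow> 'b set \<Rightarrow> bool" where
  "card_le X Y \<longleftrightarrow> (\<exists>f. inj_on f X \<and> f ` X \<subseteq> Y)"

definition same_card :: "'a set \<Rightarrow> 'b set \<Rightarrow> bool" where
  "same_card X Y \<longleftrightarrow> (\<exists>f. bij_betw f X Y)"

definition is_cardinal :: "'k::wellorder \<Rightarrow> bool" where
  "is_cardinal k \<longleftrightarrow> (\<forall>b<k. \<not> same_card (below b) (below k))"

definition regular :: "'k::wellorder \<Rightarrow> bool" where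
  "regular k \<longleftrightarrow> is_cardinal k \<and> infinite (below k) \<and>
     (\<forall>S \<subseteq> below k. (\<forall>x<k. \<exists>y\<in>S. x \<le> y) \<longrightarrow> card_le (below k) S)"

definition prodA :: "'k::wellorder set \<Rightarrow> ('k \<Rightarrow> 'k) set" where
  "prodA A = (\<Pi>\<^sub>E a\<in>A. below a)"

text \<open>Bounded subsets of A (the ideal J_bd): X is bounded below sup A.\<close>
definition bdd_in :: "'k::wellorder set \<Rightarrow> 'k set \<Rightarrow> bool" where
  "bdd_in A X \<longleftrightarrow> (\<exists>a\<in>A. \<forall>x\<in>X. x < a)"

definition bounded_in_prod :: "'k::wellorder set \<Rightarrow> ('k \<Rightarrow> 'k) set \<Rightarrow> bool" where
  "bounded_in_prod B F \<longleftrightarrow> (\<exists>g\<in>prodA B. \<forall>f\<in>F. \<forall>b\<in>B. f b < g b)"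

definition spec :: "'k::wellorder set \<Rightarrow> 'k set" where
  "spec B = {k. regular k \<and> (\<exists>F \<subseteq> prodA B. same_card F (below k) \<and>
       (\<forall>G \<subseteq> F. same_card G (below k) \<longrightarrow> \<not> bounded_in_prod B G))}"

definition ub :: "'k::wellorder set \<Rightarrow> ('k \<Rightarrow> 'k) set \<Rightarrow> 'k set" where
  "ub A G = {a\<in>A. \<forall>x<a. \<exists>f\<in>G. x \<le> f a}"

definition spec_star :: "'k::wellorder set \<Rightarrow> 'k set" where
  "spec_star A = {l. regular l \<and> (\<exists>F \<subseteq> prodA A. same_card F (below l) \<and>
       (\<forall>F0 \<subseteq> F. same_card F0 (below l) \<longrightarrow> \<not> bdd_in A (ub A F0)))}"

text \<open>C is cofinal in \<Pi>A/J_bd: every h is below some f \<in> C modulo J_bd.\<close>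
definition cofinal_mod_bd :: "'k::wellorder set \<Rightarrow> ('k \<Rightarrow> 'k) set \<Rightarrow> bool" where
  "cofinal_mod_bd A C \<longleftrightarrow> C \<subseteq> prodA A \<and>
     (\<forall>h\<in>prodA A. \<exists>f\<in>C. bdd_in A {a\<in>A. h a \<ge> f a})"

text \<open>l \<le> cf(\<Pi>A/J_bd): every cofinal family has size at least l.\<close>
definition le_cf_bd :: "'k::wellorder \<Rightarrow> 'k set \<Rightarrow> bool" where
  "le_cf_bd l A \<longleftrightarrow> (\<forall>C. cofinal_mod_bd A C \<longrightarrow> card_le (below l) C)"

definition proper_initial_segment :: "'k::wellorder set \<Rightarrow> 'k set \<Rightarrow> bool" where
  "proper_initial_segment B A \<longleftrightarrow> B \<subseteq> A \<and> B \<noteq> A \<and>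
     (\<forall>b\<in>B. \<forall>a\<in>A. a < b \<longrightarrow> a \<in> B)"

end

theory Submission
  imports Defs
begin

text \<open>Suppose a family \<open>C\<close> cofinal in \<open>\<Pi>A/J_bd\<close> has size below the regular cardinal \<open>\<lambda>\<close>.
  For all large enough \<open>a \<in> A\<close> the values \<open>c(a)\<close>, \<open>c \<in> C\<close>, are cofinal in the regular
  cardinal \<open>a\<close> (otherwise their suprema would form an \<open>h\<close> that no \<open>c \<in> C\<close> dominates),
  so every \<open>a \<in> A\<close> is at most \<open>|C|\<close> and \<open>|A| < \<lambda>\<close>. Given a witness \<open>F\<close> of size \<open>\<lambda>\<close>, each
  \<open>f \<in> F\<close> lies below some \<open>c \<in> C\<close> from some \<open>a \<in> A\<close> on; as \<open>|C|, |A| < \<lambda>\<close>, two pigeonhole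
  steps give \<open>\<lambda>\<close> many \<open>f\<close> sharing \<open>c\<close> and \<open>a\<close>. Their unbounded coordinates lie below \<open>a\<close>,
  which contradicts \<open>\<lambda> \<in> spec\<^sup>*(A)\<close>; and a bound of \<open>\<lambda>\<close> many of them on
  \<open>B = A \<inter> a\<close> extends by \<open>c\<close> to a bound on \<open>A\<close>, so their restrictions to \<open>B\<close> witness
  \<open>\<lambda> \<in> spec(B)\<close>.\<close>

lemma card_le_total: "card_le X Y \<or> card_le Y X"
  unfolding card_le_def card_of_ordLeq
  using ordLeq_total[OF card_of_Well_order card_of_Well_order] by blast

lemma card_le_antisym: "card_le X Y \<Longrightarrow> card_le Y X \<Longrightarrow> same_card X Y"
  unfolding card_le_def same_card_def by (elim exE conjE) (rule Schroeder_Bernstein)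

lemma card_le_trans: "card_le X Y \<Longrightarrow> card_le Y Z \<Longrightarrow> card_le X Z"
  unfolding card_le_def
proof (elim exE conjE)
  fix f g assume "inj_on f X" "f ` X \<subseteq> Y" "inj_on g Y" "g ` Y \<subseteq> Z"
  then show "\<exists>h. inj_on h X \<and> h ` X \<subseteq> Z"
    by (intro exI[of _ "g \<circ> f"]) (auto simp: comp_inj_on inj_on_subset)
qed

lemma card_le_subset: "X \<subseteq> Y \<Longrightarrow> card_le X Y"
  unfolding card_le_def by (intro exI[of _ id]) auto

lemma card_le_image: "card_le (f ` X) X"
  unfolding card_le_def by (intro exI[of _ "inv_into X f"]) (auto simp: inj_on_inv_into inv_into_into)

lemma not_card_le_image: "\<not> card_le Y X \<Longrightarrow> \<not> card_le Y (f ` X)"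
  using card_le_trans[OF _ card_le_image] by blast

lemma same_card_imp_card_le: "same_card X Y \<Longrightarrow> card_le X Y"
  unfolding card_le_def same_card_def bij_betw_def by blast

lemma same_card_sym: "same_card X Y \<Longrightarrow> same_card Y X"
  unfolding same_card_def using bij_betw_inv_into by blast

lemma same_card_trans: "same_card X Y \<Longrightarrow> same_card Y Z \<Longrightarrow> same_card X Z"
  unfolding same_card_def using bij_betw_trans by blast

lemma same_card_if_card_le_subset:
  "card_le X Y \<Longrightarrow> Y \<subseteq> Z \<Longrightarrow> same_card Z X \<Longrightarrow> same_card Y X"
  by (metis card_le_antisym card_le_subset card_le_trans same_card_imp_card_le same_card_sym)

lemma is_cardinal_le:
  fixes a :: "'k::wellorder"
  assumes "is_cardinal a" "card_le (below a) (below x)"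
  shows "a \<le> x"
proof (rule ccontr)
  assume "\<not> a \<le> x"
  then have "card_le (below x) (below a)" by (intro card_le_subset) (auto simp: below_def)
  then have "same_card (below x) (below a)" using assms(2) card_le_antisym by blast
  with assms(1) \<open>\<not> a \<le> x\<close> show False unfolding is_cardinal_def by auto
qed

lemma is_cardinal_not_card_le_below:
  fixes l :: "'k::wellorder"
  assumes "is_cardinal l" "card_le X (below y)" "y < l"
  shows "\<not> card_le (below l) X"
  using is_cardinal_le[OF assms(1)] card_le_trans[OF _ assms(2)] assms(3) by fastforce

lemma regular_nonempty: "regular (a::'k::wellorder) \<Longrightarrow> \<exists>z. z < a"
  unfolding regular_def below_def by (metis (no_types, lifting) Collect_empty_eq finite.emptyI)

text \<open>An infinite cardinal is a limit ordinal, since \<open>|x| = |x + 1|\<close> for infinite \<open>x\<close>.\<close>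

lemma regular_limit:
  fixes a :: "'k::wellorder"
  assumes "regular a" "x < a"
  shows "\<exists>y. x < y \<and> y < a"
proof (rule ccontr)
  assume "\<not> ?thesis"
  then have below_a: "below a = insert x (below x)"
    using assms(2) unfolding below_def by (auto simp: not_less_iff_gr_or_eq)
  have "infinite (below a)" "is_cardinal a" using assms(1) unfolding regular_def by auto
  then have "infinite (below x)" using below_a by auto
  then obtain h where "bij_betw h (below x) (insert x (below x))"
    using infinite_imp_bij_betw2[of "below x" x] by auto
  then have "same_card (below x) (below a)" unfolding below_a same_card_def by blast
  with \<open>is_cardinal a\<close> assms(2) show False unfolding is_cardinal_def by blast
qed

lemma regular_cofinal_card_le:
  fixes k :: "'k::wellorder"
  assumes "regular k" "S \<subseteq> below k" "\<forall>x<k. \<exists>y\<in>S. x \<le> y"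
  shows "card_le (below k) S"
  using assms unfolding regular_def by blast

lemma regular_small_subset_bounded:
  fixes l :: "'k::wellorder"
  assumes "regular l" "S \<subseteq> below l" "\<not> card_le (below l) S"
  shows "\<exists>b<l. \<forall>s\<in>S. s < b"
  using assms unfolding regular_def by (meson not_le)

lemma regular_small_card_le_below:
  fixes l :: "'k::wellorder"
  assumes "regular l" "\<not> card_le (below l) X"
  shows "\<exists>x<l. card_le X (below x)"
proof -
  obtain e where e: "inj_on e X" "e ` X \<subseteq> below l"
    using assms(2) card_le_total unfolding card_le_def by blast
  have "\<not> card_le (below l) (e ` X)"
    using assms(2) by (rule not_card_le_image)
  then obtain x where "x < l" "\<forall>y\<in>e ` X. y < x"
    using regular_small_subset_bounded[OF assms(1) e(2)] by blast
  with e(1) show ?thesis unfolding card_le_def below_def by blast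
qed

lemma regular_pigeonhole:
  fixes l :: "'k::wellorder"
  assumes reg: "regular l" and F: "same_card F (below l)"
    and g: "\<forall>f\<in>F. g f \<in> X" and X: "\<not> card_le (below l) X"
  shows "\<exists>x\<in>X. same_card {f\<in>F. g f = x} (below l)"
proof (rule ccontr)
  assume no_large_fibre: "\<not> ?thesis"
  obtain \<phi> where \<phi>: "bij_betw \<phi> F (below l)" using F unfolding same_card_def by blast
  have "\<forall>x\<in>X. \<exists>b. b < l \<and> (\<forall>f\<in>F. g f = x \<longrightarrow> \<phi> f < b)"
  proof
    fix x assume "x \<in> X"
    have "\<not> card_le (below l) {f\<in>F. g f = x}"
    proof
      assume "card_le (below l) {f\<in>F. g f = x}"
      then have "same_card {f\<in>F. g f = x} (below l)"
        by (rule same_card_if_card_le_subset[OF _ _ F]) blast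
      with no_large_fibre \<open>x \<in> X\<close> show False by blast
    qed
    then have "\<not> card_le (below l) (\<phi> ` {f\<in>F. g f = x})"
      by (rule not_card_le_image)
    moreover have "\<phi> ` {f\<in>F. g f = x} \<subseteq> below l" using \<phi> unfolding bij_betw_def by auto
    ultimately obtain b where "b < l" "\<forall>s\<in>\<phi> ` {f\<in>F. g f = x}. s < b"
      using regular_small_subset_bounded[OF reg] by blast
    then show "\<exists>b. b < l \<and> (\<forall>f\<in>F. g f = x \<longrightarrow> \<phi> f < b)" by auto
  qed
  then obtain \<beta> where \<beta>: "\<forall>x\<in>X. \<beta> x < l \<and> (\<forall>f\<in>F. g f = x \<longrightarrow> \<phi> f < \<beta> x)"
    by (rule bchoice[THEN exE])
  have "\<exists>\<gamma><l. \<forall>b\<in>\<beta> ` X. b < \<gamma>"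
  proof (rule regular_small_subset_bounded[OF reg])
    show "\<beta> ` X \<subseteq> below l" using \<beta> by (auto simp: below_def)
    show "\<not> card_le (below l) (\<beta> ` X)" using X by (rule not_card_le_image)
  qed
  then obtain \<gamma> where "\<gamma> < l" "\<forall>x\<in>X. \<beta> x < \<gamma>" by auto
  moreover from \<open>\<gamma> < l\<close> have "\<gamma> \<in> \<phi> ` F"
    using \<phi> unfolding bij_betw_def below_def by simp
  then obtain f where "f \<in> F" "\<phi> f = \<gamma>" by blast
  moreover from \<open>f \<in> F\<close> have "g f \<in> X" "\<phi> f < \<beta> (g f)" using \<beta> g by auto
  ultimately show False using less_asym by blast
qed

lemma regular_le_if_values_cofinal:
  fixes a :: "'k::wellorder"
  assumes "regular a" "\<forall>c\<in>C. c a < a" "\<forall>z<a. \<exists>c\<in>C. z \<le> c a" "card_le C (below x)"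
  shows "a \<le> x"
proof -
  have "(\<lambda>c. c a) ` C \<subseteq> below a" using assms(2) by (auto simp: below_def)
  moreover have "\<forall>z<a. \<exists>y\<in>(\<lambda>c. c a) ` C. z \<le> y" using assms(3) by blast
  ultimately have "card_le (below a) ((\<lambda>c. c a) ` C)" by (rule regular_cofinal_card_le[OF assms(1)])
  then have "card_le (below a) (below x)"
    using card_le_trans[OF _ card_le_trans[OF card_le_image assms(4)]] by blast
  with assms(1) show ?thesis using is_cardinal_le unfolding regular_def by blast
qed

text \<open>Where the values of \<open>C\<close> are bounded in \<open>a\<close>, let \<open>h(a)\<close> be such a bound; a member of
  \<open>C\<close> dominating \<open>h\<close> modulo \<open>J_bd\<close> shows that the values are cofinal in every large enough
  \<open>a\<close>, and there \<open>a \<le> |C|\<close> by regularity.\<close>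

lemma cofinal_mod_bd_index_le:
  fixes A :: "'k::wellorder set"
  assumes regA: "\<forall>a\<in>A. regular a" and cof: "cofinal_mod_bd A C"
    and C: "card_le C (below x)" and "a \<in> A"
  shows "a \<le> x"
proof -
  define cofinal_at where "cofinal_at a \<longleftrightarrow> (\<forall>z<a. \<exists>c\<in>C. z \<le> c a)" for a
  have le_x: "a \<le> x" if "a \<in> A" "cofinal_at a" for a
  proof (rule regular_le_if_values_cofinal[OF _ _ _ C])
    show "regular a" using regA \<open>a \<in> A\<close> by blast
    show "\<forall>c\<in>C. c a < a"
      using cof \<open>a \<in> A\<close> unfolding cofinal_mod_bd_def by (auto simp: prodA_def below_def)
  qed (use \<open>cofinal_at a\<close> cofinal_at_def in blast)
  have "\<forall>a\<in>A. \<exists>z. z < a \<and> (\<not> cofinal_at a \<longrightarrow> (\<forall>c\<in>C. c a < z))"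
  proof
    fix a assume "a \<in> A"
    show "\<exists>z. z < a \<and> (\<not> cofinal_at a \<longrightarrow> (\<forall>c\<in>C. c a < z))"
    proof (cases "cofinal_at a")
      case True
      then show ?thesis using regular_nonempty regA \<open>a \<in> A\<close> by blast
    next
      case False
      then show ?thesis unfolding cofinal_at_def by (auto simp: not_le)
    qed
  qed
  then obtain h where h: "\<forall>a\<in>A. h a < a \<and> (\<not> cofinal_at a \<longrightarrow> (\<forall>c\<in>C. c a < h a))"
    by (rule bchoice[THEN exE])
  have "restrict h A \<in> prodA A" using h by (auto simp: prodA_def below_def)
  then obtain c a0 where c: "c \<in> C" "a0 \<in> A" "\<forall>a\<in>A. c a \<le> h a \<longrightarrow> a < a0"
    using cof unfolding cofinal_mod_bd_def bdd_in_def by auto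
  have eventually_cofinal: "cofinal_at a" if "a \<in> A" "a0 \<le> a" for a
  proof (rule ccontr)
    assume "\<not> cofinal_at a"
    with h c(1) \<open>a \<in> A\<close> have "c a \<le> h a" by (simp add: less_imp_le)
    with c(3) that show False by auto
  qed
  show "a \<le> x"
  proof (cases "a0 \<le> a")
    case True
    with eventually_cofinal le_x \<open>a \<in> A\<close> show ?thesis by blast
  next
    case False
    then have "a < a0" by simp
    also have "a0 \<le> x" using le_x[OF c(2) eventually_cofinal[OF c(2) order_refl]] .
    finally show ?thesis by simp
  qed
qed

lemma cofinal_mod_bd_small_index:
  fixes l :: "'k::wellorder" and A :: "'k set"
  assumes "\<forall>a\<in>A. regular a" "regular l"
    and "cofinal_mod_bd A C" "\<not> card_le (below l) C"
  shows "\<not> card_le (below l) A"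
proof -
  obtain x where "x < l" "card_le C (below x)"
    using regular_small_card_le_below assms(2,4) by blast
  then have "A \<subseteq> {..x}" using cofinal_mod_bd_index_le assms(1,3) by blast
  moreover obtain y where "x < y" "y < l" using regular_limit[OF assms(2) \<open>x < l\<close>] by blast
  ultimately have "card_le A (below y)" by (intro card_le_subset) (auto simp: below_def)
  then show ?thesis
    using is_cardinal_not_card_le_below assms(2) \<open>y < l\<close> unfolding regular_def by blast
qed

lemma uniformly_dominated_subfamily:
  fixes l :: "'k::wellorder" and A :: "'k set"
  assumes regA: "\<forall>a\<in>A. regular a" and reg: "regular l"
    and F: "same_card F (below l)" "F \<subseteq> prodA A"
    and cof: "cofinal_mod_bd A C" and C: "\<not> card_le (below l) C"
  obtains G c a where "G \<subseteq> F" "same_card G (below l)" "c \<in> prodA A" "a \<in> A"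
    "\<forall>f\<in>G. \<forall>x\<in>A. a \<le> x \<longrightarrow> f x < c x"
proof -
  have "\<forall>f\<in>F. \<exists>c. c \<in> C \<and> (\<exists>a. a \<in> A \<and> (\<forall>x\<in>A. c x \<le> f x \<longrightarrow> x < a))"
  proof
    fix f assume "f \<in> F"
    with F(2) cof obtain c where "c \<in> C" "bdd_in A {x\<in>A. f x \<ge> c x}"
      unfolding cofinal_mod_bd_def by blast
    then show "\<exists>c. c \<in> C \<and> (\<exists>a. a \<in> A \<and> (\<forall>x\<in>A. c x \<le> f x \<longrightarrow> x < a))"
      unfolding bdd_in_def by blast
  qed
  then obtain dominator where
    "\<forall>f\<in>F. dominator f \<in> C \<and> (\<exists>a. a \<in> A \<and> (\<forall>x\<in>A. dominator f x \<le> f x \<longrightarrow> x < a))"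
    by (rule bchoice[THEN exE])
  then have dominator: "\<forall>f\<in>F. dominator f \<in> C"
    and threshold_exists: "\<forall>f\<in>F. \<exists>a. a \<in> A \<and> (\<forall>x\<in>A. dominator f x \<le> f x \<longrightarrow> x < a)"
    by auto
  from threshold_exists obtain threshold where threshold:
    "\<forall>f\<in>F. threshold f \<in> A \<and> (\<forall>x\<in>A. dominator f x \<le> f x \<longrightarrow> x < threshold f)"
    by (rule bchoice[THEN exE])
  obtain c where c: "c \<in> C" "same_card {f\<in>F. dominator f = c} (below l)"
    using regular_pigeonhole[OF reg F(1) dominator C] by blast
  let ?G = "{f\<in>F. dominator f = c}"
  have "\<forall>f\<in>?G. threshold f \<in> A" using threshold by blast
  then obtain a where a: "a \<in> A" "same_card {f\<in>?G. threshold f = a} (below l)"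
    using regular_pigeonhole[OF reg c(2) _ cofinal_mod_bd_small_index[OF regA reg cof C]] by blast
  show thesis
  proof (rule that[OF _ a(2) _ a(1)])
    show "{f\<in>?G. threshold f = a} \<subseteq> F" by blast
    show "c \<in> prodA A" using c(1) cof unfolding cofinal_mod_bd_def by blast
    show "\<forall>f\<in>{f\<in>?G. threshold f = a}. \<forall>x\<in>A. a \<le> x \<longrightarrow> f x < c x"
      using threshold by (auto simp: not_le[symmetric])
  qed
qed

lemma bdd_in_ub_if_dominated:
  assumes "c \<in> prodA A" "a \<in> A" "\<forall>f\<in>G. \<forall>x\<in>A. a \<le> x \<longrightarrow> f x < c x"
  shows "bdd_in A (ub A G)"
proof -
  have "x < a" if x: "x \<in> ub A G" for x
  proof (rule ccontr)
    assume "\<not> x < a"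
    have "x \<in> A" using x unfolding ub_def by blast
    then have "c x < x" using assms(1) by (auto simp: prodA_def below_def)
    then obtain f where "f \<in> G" "c x \<le> f x" using x unfolding ub_def by blast
    with assms(3) \<open>x \<in> A\<close> \<open>\<not> x < a\<close> show False by (meson leD not_less)
  qed
  with assms(2) show ?thesis unfolding bdd_in_def by blast
qed

lemma bounded_in_prod_if_dominated:
  assumes "bounded_in_prod {x\<in>A. x < a} G" "c \<in> prodA A"
    "\<forall>f\<in>G. \<forall>x\<in>A. a \<le> x \<longrightarrow> f x < c x"
  shows "bounded_in_prod A G"
proof -
  obtain g where g: "g \<in> prodA {x\<in>A. x < a}" "\<forall>f\<in>G. \<forall>x\<in>A. x < a \<longrightarrow> f x < g x"
    using assms(1) unfolding bounded_in_prod_def by auto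
  let ?g = "restrict (\<lambda>x. if x < a then g x else c x) A"
  have "?g \<in> prodA A" using g(1) assms(2) by (auto simp: prodA_def)
  moreover have "\<forall>f\<in>G. \<forall>x\<in>A. f x < ?g x" using g(2) assms(3) by (auto simp: not_less)
  ultimately show ?thesis unfolding bounded_in_prod_def by blast
qed

lemma bounded_in_prod_constant_on:
  assumes "\<forall>b\<in>B. regular b" "f0 \<in> prodA B" "\<forall>f\<in>G. \<forall>b\<in>B. f b = f0 b"
  shows "bounded_in_prod B G"
proof -
  have "\<forall>b\<in>B. \<exists>y. f0 b < y \<and> y < b"
  proof
    fix b assume "b \<in> B"
    with assms(2) have "f0 b < b" by (auto simp: prodA_def below_def)
    with assms(1) \<open>b \<in> B\<close> show "\<exists>y. f0 b < y \<and> y < b" using regular_limit by blast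
  qed
  then obtain g where g: "\<forall>b\<in>B. f0 b < g b \<and> g b < b" by (rule bchoice[THEN exE])
  have "restrict g B \<in> prodA B" using g by (auto simp: prodA_def below_def)
  moreover have "\<forall>f\<in>G. \<forall>b\<in>B. f b < restrict g B b" using g assms(3) by auto
  ultimately show ?thesis unfolding bounded_in_prod_def by blast
qed

lemma restrict_in_prodA: "f \<in> prodA A \<Longrightarrow> B \<subseteq> A \<Longrightarrow> restrict f B \<in> prodA B"
  by (auto simp: prodA_def PiE_iff)

lemma bounded_in_prod_restrict:
  "bounded_in_prod B ((\<lambda>f. restrict f B) ` H) \<longleftrightarrow> bounded_in_prod B H"
  unfolding bounded_in_prod_def by auto

text \<open>The restriction map to \<open>B\<close> has no fibre of size \<open>\<lambda>\<close> on \<open>G\<close>: its members agree on \<open>B\<close>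
  and so are bounded there. Hence the restrictions still form a family of size \<open>\<lambda>\<close>.\<close>

lemma spec_if_subfamilies_unbounded:
  fixes l :: "'k::wellorder" and B :: "'k set"
  assumes regB: "\<forall>b\<in>B. regular b" and reg: "regular l"
    and G: "same_card G (below l)" "(\<lambda>f. restrict f B) ` G \<subseteq> prodA B"
    and unbdd: "\<forall>H\<subseteq>G. same_card H (below l) \<longrightarrow> \<not> bounded_in_prod B H"
  shows "l \<in> spec B"
proof -
  let ?r = "\<lambda>f. restrict f B"
  have "card_le (below l) (?r ` G)"
  proof (rule ccontr)
    assume small: "\<not> card_le (below l) (?r ` G)"
    have "\<forall>f\<in>G. ?r f \<in> ?r ` G" by blast
    from regular_pigeonhole[OF reg G(1) this small] obtain f0
      where f0: "f0 \<in> ?r ` G" "same_card {f\<in>G. ?r f = f0} (below l)" by blast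
    have "bounded_in_prod B {f\<in>G. ?r f = f0}"
    proof (rule bounded_in_prod_constant_on[OF regB])
      show "f0 \<in> prodA B" using f0(1) G(2) by (rule subsetD[rotated])
      show "\<forall>f\<in>{f\<in>G. ?r f = f0}. \<forall>b\<in>B. f b = f0 b" by auto
    qed
    moreover have "{f\<in>G. ?r f = f0} \<subseteq> G" by blast
    ultimately show False using unbdd f0(2) by blast
  qed
  moreover have "card_le (?r ` G) (below l)"
    using card_le_image G(1) card_le_trans same_card_imp_card_le by blast
  ultimately have r_G: "same_card (?r ` G) (below l)" by (simp add: card_le_antisym)
  have "\<not> bounded_in_prod B H'" if H': "H' \<subseteq> ?r ` G" "same_card H' (below l)" for H'
  proof -
    let ?H = "inv_into G ?r ` H'"
    have "bij_betw (inv_into G ?r) H' ?H"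
      using inj_on_inv_into[OF H'(1)] unfolding bij_betw_def by blast
    then have "same_card H' ?H" unfolding same_card_def by blast
    then have "same_card ?H (below l)" using same_card_sym same_card_trans H'(2) by blast
    moreover have "?H \<subseteq> G" using H'(1) by (auto intro: inv_into_into)
    ultimately have "\<not> bounded_in_prod B ?H" using unbdd by blast
    moreover have "?r ` ?H = H'" using H'(1) by (simp add: image_inv_into_cancel)
    ultimately show ?thesis using bounded_in_prod_restrict[of B ?H] by simp
  qed
  with reg r_G G(2) show ?thesis
    unfolding spec_def by (intro CollectI conjI exI[of _ "?r ` G"]) auto
qed

lemma spec_proper_initial_segment_if_small_cofinal:
  fixes l :: "'k::wellorder" and A :: "'k set"
  assumes regA: "\<forall>a\<in>A. regular a" and "l \<in> spec A"
    and cof: "cofinal_mod_bd A C" and C: "\<not> card_le (below l) C"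
  shows "\<exists>B. proper_initial_segment B A \<and> l \<in> spec B"
proof -
  obtain F where reg: "regular l" and F: "F \<subseteq> prodA A" "same_card F (below l)"
    and unbdd: "\<forall>G\<subseteq>F. same_card G (below l) \<longrightarrow> \<not> bounded_in_prod A G"
    using \<open>l \<in> spec A\<close> unfolding spec_def by blast
  obtain G c a where G: "G \<subseteq> F" "same_card G (below l)" "c \<in> prodA A" "a \<in> A"
    "\<forall>f\<in>G. \<forall>x\<in>A. a \<le> x \<longrightarrow> f x < c x"
    using uniformly_dominated_subfamily[OF regA reg F(2,1) cof C] by blast
  have "l \<in> spec {x\<in>A. x < a}"
  proof (rule spec_if_subfamilies_unbounded[OF _ reg G(2)])
    show "(\<lambda>f. restrict f {x\<in>A. x < a}) ` G \<subseteq> prodA {x\<in>A. x < a}"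
      using G(1) F(1) by (intro image_subsetI restrict_in_prodA) auto
    show "\<forall>H\<subseteq>G. same_card H (below l) \<longrightarrow> \<not> bounded_in_prod {x\<in>A. x < a} H"
    proof (intro allI impI notI)
      fix H assume H: "H \<subseteq> G" "same_card H (below l)" "bounded_in_prod {x\<in>A. x < a} H"
      have "bounded_in_prod A H"
        using bounded_in_prod_if_dominated[OF H(3) G(3)] G(5) H(1) by blast
      with H(1,2) G(1) unbdd show False by blast
    qed
  qed (use regA in auto)
  moreover have "proper_initial_segment {x\<in>A. x < a} A"
    using G(4) unfolding proper_initial_segment_def by auto
  ultimately show ?thesis by blast
qed

lemma not_in_spec_star_if_small_cofinal:
  fixes l :: "'k::wellorder" and A :: "'k set"
  assumes regA: "\<forall>a\<in>A. regular a"
    and cof: "cofinal_mod_bd A C" and C: "\<not> card_le (below l) C"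
  shows "l \<notin> spec_star A"
proof
  assume "l \<in> spec_star A"
  then obtain F where reg: "regular l" and F: "F \<subseteq> prodA A" "same_card F (below l)"
    and unbdd: "\<forall>G\<subseteq>F. same_card G (below l) \<longrightarrow> \<not> bdd_in A (ub A G)"
    unfolding spec_star_def by blast
  obtain G c a where "G \<subseteq> F" "same_card G (below l)" "c \<in> prodA A" "a \<in> A"
    "\<forall>f\<in>G. \<forall>x\<in>A. a \<le> x \<longrightarrow> f x < c x"
    using uniformly_dominated_subfamily[OF regA reg F(2,1) cof C] by blast
  then show False using unbdd bdd_in_ub_if_dominated by blast
qed

theorem proposition5p11:
  fixes A :: "'k::wellorder set" and l :: 'k
  assumes "\<forall>a\<in>A. regular a"
  shows "(l \<in> spec A \<longrightarrow>
            le_cf_bd l A \<or> (\<exists>B. proper_initial_segment B A \<and> l \<in> spec B))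
       \<and> (l \<in> spec_star A \<longrightarrow> le_cf_bd l A)"
proof (cases "le_cf_bd l A")
  case False
  then obtain C where C: "cofinal_mod_bd A C" "\<not> card_le (below l) C"
    unfolding le_cf_bd_def by blast
  show ?thesis
    using spec_proper_initial_segment_if_small_cofinal[OF assms _ C]
      not_in_spec_star_if_small_cofinal[OF assms C] by blast
qed simp

end
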